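(* Let $\omega\in S_n$. If $M_\omega$ contains a $C_4$-parallelogram-pattern poset, then $M_\omega$ contains a parallelogram-pattern poset.
   Context: Permutations $\omega\in S_n$ are written in one-line notation. Let ${\rm Inv}(\omega)=\{(i,j): 1\le i<j\le n,\ \omega(i)>\omega(j)\}$, $c_i(\omega)=\#\{j: i<j\le n,\ \omega(i)>\omega(j)\}$, and for $i<j$, $c_{i,j}(\omega)=\#\{k: i<k<j,\ \omega(i)>\omega(k)\}$; $[m]=\{1,\dots,m\}$. For $i$ with $c_i(\omega)>0$ and $x\in[c_i(\omega)]$, $m_{i,x}(\omega)\in\mathbb{N}^n$ has $j$-th coordinate $0$ if $j<i$; $x$ if $j=i$; $0$ if $j>i$ and $(i,j)\in{\rm Inv}(\omega)$; $\max\{0,x-c_{i,j}(\omega)\}$ if $j>i$ and $(i,j)\notin{\rm Inv}(\omega)$. $M_\omega$ is the set of all such $m_{i,x}(\omega)$, ordered by the product order on $\mathbb{N}^n$. For $1\le i<j\le n$, $b<a$ in $[c_i(\omega)]$ and $c<d$ in $[c_j(\omega)]$ with $a+c=b+d$, the set $\{m_{i,a}(\omega),m_{i,b}(\omega),m_{j,c}(\omega),m_{j,d}(\omega)\}$ is a parallelogram-pattern poset if $m_{i,a}(\omega)>m_{j,d}(\omega)$, $m_{i,b}(\omega)>m_{j,c}(\omega)$, and $m_{i,b}(\omega)$, $m_{j,d}(\omega)$ are incomparable; it is a $C_4$-parallelogram-pattern poset if $m_{i,a}(\omega)>m_{j,d}(\omega)$, $m_{i,b}(\omega)>m_{j,c}(\omega)$,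 and $m_{i,b}(\omega)$, $m_{j,d}(\omega)$ are comparable. *)

theory Defs
  imports "HOL-Combinatorics.Permutations"
begin

(* Permutations of [n] = {1..n} are functions w :: nat => nat with w permutes {1..n};
   w i is the i-th entry of the one-line notation.  Vectors in N^n are functions
   nat => nat, of which only coordinates 1..n are relevant. *)

definition Inv :: "nat \<Rightarrow> (nat \<Rightarrow> nat) \<Rightarrow> (nat \<times> nat) set" where
  "Inv n w = {(i,j). 1 \<le> i \<and> i < j \<and> j \<le> n \<and> w i > w j}"

definition cc :: "nat \<Rightarrow> (nat \<Rightarrow> nat) \<Rightarrow> nat \<Rightarrow> nat" where
  "cc n w i = card {j. i < j \<and> j \<le> n \<and> w i > w j}"

definition cij :: "(nat \<Rightarrow> nat) \<Rightarrow> nat \<Rightarrow> nat \<Rightarrow> nat" where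
  "cij w i j = card {k. i < k \<and> k < j \<and> w i > w k}"

(* m_{i,x}(w); nat subtraction x - c equals max 0 (x - c) *)
definition mvec :: "nat \<Rightarrow> (nat \<Rightarrow> nat) \<Rightarrow> nat \<Rightarrow> nat \<Rightarrow> (nat \<Rightarrow> nat)" where
  "mvec n w i x = (\<lambda>j. if j < i then 0
                        else if j = i then x
                        else if (i,j) \<in> Inv n w then 0
                        else x - cij w i j)"

definition vle :: "nat \<Rightarrow> (nat \<Rightarrow> nat) \<Rightarrow> (nat \<Rightarrow> nat) \<Rightarrow> bool" where
  "vle n u v = (\<forall>j\<in>{1..n}. u j \<le> v j)"

definition vlt :: "nat \<Rightarrow> (nat \<Rightarrow> nat) \<Rightarrow> (nat \<Rightarrow> nat) \<Rightarrow> bool" where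
  "vlt n u v = (vle n u v \<and> \<not> vle n v u)"

definition comparable :: "nat \<Rightarrow> (nat \<Rightarrow> nat) \<Rightarrow> (nat \<Rightarrow> nat) \<Rightarrow> bool" where
  "comparable n u v = (vle n u v \<or> vle n v u)"

definition pattern_data :: "nat \<Rightarrow> (nat \<Rightarrow> nat) \<Rightarrow> nat \<Rightarrow> nat \<Rightarrow> nat \<Rightarrow> nat \<Rightarrow> nat \<Rightarrow> nat \<Rightarrow> bool" where
  "pattern_data n w i j a b c d =
     (1 \<le> i \<and> i < j \<and> j \<le> n \<and>
      1 \<le> b \<and> b < a \<and> a \<le> cc n w i \<and>
      1 \<le> c \<and> c < d \<and> d \<le> cc n w j \<and>
      a + c = b + d \<and>
      vlt n (mvec n w j d) (mvec n w i a) \<and>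
      vlt n (mvec n w j c) (mvec n w i b))"

definition parallelogram_pattern :: "nat \<Rightarrow> (nat \<Rightarrow> nat) \<Rightarrow> nat \<Rightarrow> nat \<Rightarrow> nat \<Rightarrow> nat \<Rightarrow> nat \<Rightarrow> nat \<Rightarrow> bool" where
  "parallelogram_pattern n w i j a b c d =
     (pattern_data n w i j a b c d \<and> \<not> comparable n (mvec n w i b) (mvec n w j d))"

definition C4_parallelogram_pattern :: "nat \<Rightarrow> (nat \<Rightarrow> nat) \<Rightarrow> nat \<Rightarrow> nat \<Rightarrow> nat \<Rightarrow> nat \<Rightarrow> nat \<Rightarrow> nat \<Rightarrow> bool" where
  "C4_parallelogram_pattern n w i j a b c d =
     (pattern_data n w i j a b c d \<and> comparable n (mvec n w i b) (mvec n w j d))"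

end

theory Submission
  imports Defs
begin

(* The vector m_{i,b} is positive at coordinate i while m_{j,d} vanishes there, so the
   comparability of the two must read m_{j,d} <= m_{i,b}.  Reading this at coordinate j shows
   that (i,j) is not an inversion and that d + c_{i,j} <= b; hence c_i >= a > b >= c_{i,j} + 2
   and c_j >= d >= 2.
   Conversely, for a non-inversion i < j, m_{j,y} <= m_{i,x} holds as soon as y + c_{i,j} <= x
   (using the subadditivity c_{i,l} <= c_{i,j} + c_{j,l} for non-inversions i < j < l), and the
   relation is strict because of coordinate i.  With C = c_{i,j} this makes
   {m_{i,C+2}, m_{i,C+1}, m_{j,1}, m_{j,2}} a parallelogram pattern: m_{i,C+1} and m_{j,2} are
   incomparable, as coordinate i forbids one direction and coordinate j (value 1 versus 2)
   the other.  Nothing here uses that w is a permutation; the argument works for any w. *)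

lemma mvec_at_self: "mvec n w i x i = x"
  by (simp add: mvec_def)

lemma mvec_before: "l < i \<Longrightarrow> mvec n w i x l = 0"
  by (simp add: mvec_def)

lemma not_Inv_iff:
  assumes "1 \<le> i" "i < j" "j \<le> n"
  shows "(i,j) \<notin> Inv n w \<longleftrightarrow> w i \<le> w j"
  using assms by (auto simp: Inv_def)

lemma mvec_at_non_inversion:
  assumes "i < j" "(i,j) \<notin> Inv n w"
  shows "mvec n w i x j = x - cij w i j"
  using assms by (simp add: mvec_def)

lemma mvec_not_le_later:
  assumes "i \<in> {1..n}" "i < j" "1 \<le> x"
  shows "\<not> vle n (mvec n w i x) (mvec n w j y)"
proof
  assume "vle n (mvec n w i x) (mvec n w j y)"
  hence "mvec n w i x i \<le> mvec n w j y i" using assms(1) by (simp add: vle_def)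
  thus False using assms by (simp add: mvec_at_self mvec_before)
qed

text \<open>Subadditivity of c_{i,l} along a chain of non-inversions: a position k between i and l
  with w k < w i lies before j (counted in c_{i,j}) or after j (counted in c_{j,l}).\<close>

lemma cij_subadditive:
  assumes "i < j" "j < l" "w i \<le> w j"
  shows "cij w i l \<le> cij w i j + cij w j l"
proof -
  have "{k. i < k \<and> k < l \<and> w i > w k} \<subseteq>
        {k. i < k \<and> k < j \<and> w i > w k} \<union> {k. j < k \<and> k < l \<and> w j > w k}"
    using assms by (auto simp: not_less_iff_gr_or_eq)
  hence "cij w i l \<le> card ({k. i < k \<and> k < j \<and> w i > w k} \<union> {k. j < k \<and> k < l \<and> w j > w k})"
    unfolding cij_def by (intro card_mono) auto
  also have "\<dots> \<le> cij w i j + cij w j l" unfolding cij_def by (rule card_Un_le)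
  finally show ?thesis .
qed

text \<open>Beyond j, coordinates of m_{j,y} are either 0 (inversions of j) or y - c_{j,l}, and then
  (i,l) is a non-inversion as well, so subadditivity applies.\<close>

lemma mvec_le_of_shift:
  assumes "i < j" "w i \<le> w j" "y + cij w i j \<le> x"
  shows "vle n (mvec n w j y) (mvec n w i x)"
  unfolding vle_def
proof
  fix l assume l: "l \<in> {1..n}"
  consider "l < j" | "l = j" | "j < l" "(j,l) \<in> Inv n w" | "j < l" "(j,l) \<notin> Inv n w"
    by linarith
  thus "mvec n w j y l \<le> mvec n w i x l"
  proof cases
    case 3 thus ?thesis by (simp add: mvec_def)
  next
    case 4
    hence "w j \<le> w l" using l assms(1) by (auto simp: Inv_def)
    hence "(i,l) \<notin> Inv n w" using assms(2) by (auto simp: Inv_def)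
    hence "mvec n w i x l = x - cij w i l" using 4 assms(1) by (simp add: mvec_def)
    moreover have "mvec n w j y l = y - cij w j l" using 4 by (simp add: mvec_def)
    moreover have "cij w i l \<le> cij w i j + cij w j l"
      using cij_subadditive[of i j l w] assms 4 by simp
    ultimately show ?thesis using assms(3) by linarith
  qed (use assms in \<open>auto simp: mvec_def Inv_def\<close>)
qed

lemma mvec_lt_of_shift:
  assumes "i \<in> {1..n}" "i < j" "w i \<le> w j" "y + cij w i j \<le> x" "1 \<le> x"
  shows "vlt n (mvec n w j y) (mvec n w i x)"
  using mvec_le_of_shift[OF assms(2-4)] mvec_not_le_later[OF assms(1,2,5)]
  by (simp add: vlt_def)

text \<open>In a C4-parallelogram pattern the comparability goes downward from m_{i,b} to m_{j,d},
  which forces (i,j) to be a non-inversion with d + c_{i,j} <= b.\<close>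

lemma C4_pattern_shape:
  assumes "C4_parallelogram_pattern n w i j a b c d"
  shows "w i \<le> w j" and "d + cij w i j \<le> b"
proof -
  have ij: "1 \<le> i" "i < j" "j \<le> n" "1 \<le> b" "1 \<le> d"
    using assms by (auto simp: C4_parallelogram_pattern_def pattern_data_def)
  have "comparable n (mvec n w i b) (mvec n w j d)"
    using assms by (simp add: C4_parallelogram_pattern_def)
  hence "vle n (mvec n w j d) (mvec n w i b)"
    using mvec_not_le_later[of i n j b w d] ij by (auto simp: comparable_def)
  hence "mvec n w j d j \<le> mvec n w i b j" using ij by (simp add: vle_def)
  hence at_j: "d \<le> mvec n w i b j" by (simp add: mvec_at_self)
  have nonInv: "(i,j) \<notin> Inv n w" using at_j ij by (auto simp: mvec_def)
  thus "w i \<le> w j" using not_Inv_iff ij by blast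
  show "d + cij w i j \<le> b" using at_j ij(4,5) by (simp add: mvec_at_non_inversion[OF ij(2) nonInv])
qed

lemma canonical_parallelogram_pattern:
  assumes "1 \<le> i" "i < j" "j \<le> n" "w i \<le> w j"
    and "cij w i j + 2 \<le> cc n w i" "2 \<le> cc n w j"
  shows "parallelogram_pattern n w i j (cij w i j + 2) (cij w i j + 1) 1 2"
proof -
  define C where "C = cij w i j"
  have i_in: "i \<in> {1..n}" and j_in: "j \<in> {1..n}" using assms by auto
  have nonInv: "(i,j) \<notin> Inv n w" using not_Inv_iff assms(1-4) by blast
  have "\<not> vle n (mvec n w j 2) (mvec n w i (C + 1))"
  proof
    assume "vle n (mvec n w j 2) (mvec n w i (C + 1))"
    hence "mvec n w j 2 j \<le> mvec n w i (C + 1) j" using j_in by (simp add: vle_def)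
    thus False by (simp add: mvec_at_self mvec_at_non_inversion[OF assms(2) nonInv] C_def)
  qed
  hence "\<not> comparable n (mvec n w i (C + 1)) (mvec n w j 2)"
    using mvec_not_le_later[OF i_in assms(2)] by (simp add: comparable_def)
  moreover have "vlt n (mvec n w j 2) (mvec n w i (C + 2))"
    and "vlt n (mvec n w j 1) (mvec n w i (C + 1))"
    using mvec_lt_of_shift[OF i_in assms(2,4)] by (simp_all add: C_def)
  ultimately show ?thesis
    using assms by (simp add: parallelogram_pattern_def pattern_data_def C_def)
qed

theorem mainTheorem6:
  fixes n :: nat and w :: "nat \<Rightarrow> nat"
  assumes "w permutes {1..n}"
    and "\<exists>i j a b c d. C4_parallelogram_pattern n w i j a b c d"
  shows "\<exists>i j a b c d. parallelogram_pattern n w i j a b c d"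
proof -
  obtain i j a b c d where P: "C4_parallelogram_pattern n w i j a b c d"
    using assms(2) by blast
  have data: "1 \<le> i" "i < j" "j \<le> n" "b < a" "a \<le> cc n w i" "1 \<le> c" "c < d" "d \<le> cc n w j"
    using P by (auto simp: C4_parallelogram_pattern_def pattern_data_def)
  have "w i \<le> w j" and "d + cij w i j \<le> b"
    using C4_pattern_shape[OF P] by auto
  hence "parallelogram_pattern n w i j (cij w i j + 2) (cij w i j + 1) 1 2"
    using data by (intro canonical_parallelogram_pattern) auto
  thus ?thesis by blast
qed

end
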